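(* Let $L \geq 1$, $m = L+1$, $\gamma = (L+1)^3$, and for $i \in \{0,\ldots,L\}$ and $k \in [m]$ define $$w_i(k) = \gamma^{2(i+1)k - k^2 + 1} + \sum_{r=0}^L \gamma^{(2r+1)(i+1) - r^2 - r}, \qquad \pi_i(A_k) = \frac{w_i(k)}{\sum_{h=1}^m w_i(h)}.$$ Let $B = \min_{k\in[m]}\prod_{i=1}^L \min\left\{1, \frac{\pi_{i-1}(A_k)}{\pi_i(A_k)}\right\}$. Then $B > \frac{1}{(L+1)^7}$.
   Context: These numbers are the masses of the modes $A_k$ at level $i$ in the paper's construction of a multimodal target (cross terms neglected); $B$ is the bottleneck ratio of the corresponding parallel tempering chain. *)

theory Defs
  imports Complex_Main
begin

definition gam :: "nat \<Rightarrow> real" where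
  "gam L = (real L + 1) ^ 3"

definition wt :: "nat \<Rightarrow> nat \<Rightarrow> nat \<Rightarrow> real" where
  "wt L i k = gam L powi (2 * (int i + 1) * int k - int k ^ 2 + 1)
     + (\<Sum>r=0..L. gam L powi ((2 * int r + 1) * (int i + 1) - int r ^ 2 - int r))"

definition piA :: "nat \<Rightarrow> nat \<Rightarrow> nat \<Rightarrow> real" where
  "piA L i k = wt L i k / (\<Sum>h=1..L+1. wt L i h)"

definition bottleneck :: "nat \<Rightarrow> real" where
  "bottleneck L = Min ((\<lambda>k. \<Prod>i=1..L. min 1 (piA L (i - 1) k / piA L i k)) ` {1..L+1})"

end

theory Submission
  imports Defs
begin

(*
  Dividing w_i(k) by g^((i+1)^2), where g = (L+1)^3, leaves a peak term
  a_i(k) = g^(1 - (k-i-1)^2) plus a base term c_i = sum_r g^(-(r-i)(r-i-1)) that does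
  not depend on k.  The peak term equals g at k = i+1, equals 1 at k = i and k = i+2,
  and is at most 1/g^2 elsewhere; c_i is at least 1 (at least 2 below the top level)
  and at most 2 + (L+1)/g^2.  So every normaliser at a level i >= 1 lies between
  g + L + 2 and g + 2L + 4 + o(1), and pi_(i-1)(A_k) / pi_i(A_k) is at least
  (1 - 1/(L+1)) times a penalty which is 1/g when k = i+1 (mode k becomes the peak),
  1/2 when k = i+2, and 1 otherwise.  Each mode pays each of these penalties at most
  once, and by Bernoulli's inequality (1 - 1/(L+1))^L >= 1/(L+1), so
  B >= 1/(2 (L+1)^4) > 1/(L+1)^7.
*)

definition peak_wt :: "real \<Rightarrow> nat \<Rightarrow> nat \<Rightarrow> real" where
  "peak_wt g i k = g powi (1 - (int k - int i - 1)^2)"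

definition base_wt :: "real \<Rightarrow> nat \<Rightarrow> nat \<Rightarrow> real" where
  "base_wt g L i = (\<Sum>r=0..L. g powi (- ((int r - int i) * (int r - int i - 1))))"

definition level_wt :: "real \<Rightarrow> nat \<Rightarrow> nat \<Rightarrow> nat \<Rightarrow> real" where
  "level_wt g L i k = peak_wt g i k + base_wt g L i"

definition level_norm :: "real \<Rightarrow> nat \<Rightarrow> nat \<Rightarrow> real" where
  "level_norm g L i = (\<Sum>h=1..L+1. level_wt g L i h)"

definition far_mass :: "real \<Rightarrow> nat \<Rightarrow> real" where
  "far_mass g L = (real L + 1) / g^2"

lemma gam_pos: "gam L > 0"
  by (simp add: gam_def)

lemma gam_ge_8: "L \<ge> 1 \<Longrightarrow> gam L \<ge> 8"
  using power_mono[of 2 "real L + 1" 3] by (simp add: gam_def)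

lemma wt_eq_level_wt: "wt L i k = gam L powi ((int i + 1)^2) * level_wt (gam L) L i k"
proof -
  have nonzero: "gam L \<noteq> 0"
    using gam_pos[of L] by simp
  have peak_exp: "2 * (int i + 1) * int k - int k ^ 2 + 1 = (int i + 1)^2 + (1 - (int k - int i - 1)^2)"
    and base_exp: "\<And>r. (2 * int r + 1) * (int i + 1) - int r ^ 2 - int r
           = (int i + 1)^2 + - ((int r - int i) * (int r - int i - 1))"
    by (simp_all add: power2_eq_square algebra_simps)
  show ?thesis
    unfolding wt_def level_wt_def peak_wt_def base_wt_def peak_exp base_exp
      power_int_add[OF disjI1[OF nonzero]]
    by (simp add: distrib_left sum_distrib_left)
qed

lemma piA_eq_level_wt: "piA L i k = level_wt (gam L) L i k / level_norm (gam L) L i"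
  using gam_pos[of L]
  by (simp add: piA_def level_norm_def wt_eq_level_wt flip: sum_distrib_left)

lemma powi_le_inverse_square:
  fixes g :: real and e :: int
  assumes "g \<ge> 1" "e \<le> -2"
  shows "g powi e \<le> 1 / g^2"
proof -
  have "g powi e \<le> g powi (-2)"
    using assms by (intro power_int_increasing) auto
  then show ?thesis
    by (simp add: power_int_minus_divide)
qed

lemma sum_le_exceptional_plus_small:
  fixes f :: "'a \<Rightarrow> real"
  assumes "finite A" "finite E" "\<And>x. x \<in> E \<Longrightarrow> f x \<ge> 0"
    and "\<And>x. x \<in> A - E \<Longrightarrow> f x \<le> \<epsilon>" "\<epsilon> \<ge> 0"
  shows "sum f A \<le> sum f E + real (card A) * \<epsilon>"
proof -
  have "sum f A = sum f (A \<inter> E) + sum f (A - E)"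
    using assms(1) by (rule sum.Int_Diff)
  also have "sum f (A \<inter> E) \<le> sum f E"
    using assms(2,3) by (intro sum_mono2) auto
  also have "sum f (A - E) \<le> real (card (A - E)) * \<epsilon>"
    using sum_bounded_above[of "A - E" f \<epsilon>] assms(4) by simp
  also have "\<dots> \<le> card A * \<epsilon>"
    using assms(1,5) by (intro mult_right_mono) (auto intro: card_mono)
  finally show ?thesis by simp
qed

lemma int_times_pred_ge_2:
  fixes d :: int
  assumes "d \<noteq> 0" "d \<noteq> 1"
  shows "d * (d - 1) \<ge> 2"
proof (cases "d \<ge> 2")
  case True
  then have "d * (d - 1) \<ge> 2 * 1" by (intro mult_mono) auto
  then show ?thesis by simp
next
  case False
  then have "(- d) * (1 - d) \<ge> 1 * 2" using assms by (intro mult_mono) auto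
  then show ?thesis by (simp add: algebra_simps)
qed

lemma peak_wt_pos: "g > 0 \<Longrightarrow> peak_wt g i k > 0"
  by (simp add: peak_wt_def)

lemma peak_wt_at_peak [simp]: "peak_wt g i (Suc i) = g"
  and peak_wt_left_of_peak [simp]: "peak_wt g i i = 1"
  and peak_wt_right_of_peak [simp]: "peak_wt g i (Suc (Suc i)) = 1"
  by (simp_all add: peak_wt_def)

lemma peak_wt_far:
  assumes "g \<ge> 1" "k \<notin> {i, Suc i, Suc (Suc i)}"
  shows "peak_wt g i k \<le> 1 / g^2"
proof -
  define d where "d = int k - int i - 1"
  have "d \<noteq> 0" "d \<noteq> 1" "d \<noteq> -1"
    using assms(2) by (auto simp: d_def)
  then have "d^2 \<ge> 3"
    using int_times_pred_ge_2[of d] int_times_pred_ge_2[of "-d"]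
    by (auto simp: power2_eq_square algebra_simps)
  then show ?thesis
    unfolding peak_wt_def d_def[symmetric] using assms(1) by (intro powi_le_inverse_square) auto
qed

lemma peak_wt_mono_level:
  assumes "g \<ge> 1" "k \<le> Suc i"
  shows "peak_wt g (Suc i) k \<le> peak_wt g i k"
proof -
  have "(int i + 1 - int k)^2 \<le> (int i + 2 - int k)^2"
    using assms(2) by (intro power_mono) auto
  then show ?thesis
    unfolding peak_wt_def using assms(1)
    by (intro power_int_increasing) (auto simp: power2_eq_square algebra_simps)
qed

lemma peak_sum_le:
  assumes "g \<ge> 1"
  shows "(\<Sum>h=1..L+1. peak_wt g i h) \<le> g + 2 + far_mass g L"
proof -
  have "(\<Sum>h=1..L+1. peak_wt g i h)
      \<le> (\<Sum>h\<in>{i, Suc i, Suc (Suc i)}. peak_wt g i h) + real (card {1..L+1}) * (1 / g^2)"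
    using assms by (intro sum_le_exceptional_plus_small) (auto intro: less_imp_le peak_wt_pos peak_wt_far)
  then show ?thesis
    by (simp add: far_mass_def ac_simps)
qed

lemma peak_sum_ge:
  assumes "g > 0" "1 \<le> i" "i \<le> L"
  shows "g + 1 \<le> (\<Sum>h=1..L+1. peak_wt g i h)"
proof -
  have "(\<Sum>h\<in>{i, Suc i}. peak_wt g i h) \<le> (\<Sum>h=1..L+1. peak_wt g i h)"
    using assms by (intro sum_mono2) (auto intro: less_imp_le peak_wt_pos)
  then show ?thesis
    by simp
qed

lemma base_wt_le:
  assumes "g \<ge> 1"
  shows "base_wt g L i \<le> 2 + far_mass g L"
proof -
  have "g powi (- ((int r - int i) * (int r - int i - 1))) \<le> 1 / g^2" if "r \<notin> {i, Suc i}" for r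
    using that assms int_times_pred_ge_2[of "int r - int i"] by (intro powi_le_inverse_square) auto
  then have "base_wt g L i \<le> (\<Sum>r\<in>{i, Suc i}. g powi (- ((int r - int i) * (int r - int i - 1))))
          + real (card {0..L}) * (1 / g^2)"
    unfolding base_wt_def using assms by (intro sum_le_exceptional_plus_small) auto
  then show ?thesis
    by (simp add: far_mass_def ac_simps)
qed

lemma base_wt_ge:
  assumes "g > 0" "i \<le> L"
  shows "base_wt g L i \<ge> (if i < L then 2 else 1)"
proof -
  have "(\<Sum>r\<in>(if i < L then {i, Suc i} else {i}). g powi (- ((int r - int i) * (int r - int i - 1))))
      \<le> base_wt g L i"
    unfolding base_wt_def using assms by (intro sum_mono2) (auto simp: less_imp_le)
  then show ?thesis
    by (simp split: if_splits)
qed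

definition crossing_penalty :: "real \<Rightarrow> nat \<Rightarrow> nat \<Rightarrow> real" where
  "crossing_penalty g k i = (if k = Suc i then 1 / g else if k = Suc (Suc i) then 1 / 2 else 1)"

lemma far_mass_nonneg: "far_mass g L \<ge> 0"
  by (simp add: far_mass_def)

lemma crossing_penalty_level_wt_le:
  assumes "g \<ge> 2" "j < L"
  shows "crossing_penalty g k (Suc j) * level_wt g L (Suc j) k \<le> (1 + far_mass g L) * level_wt g L j k"
proof -
  define \<delta> where "\<delta> = far_mass g L"
  have "\<delta> \<ge> 0"
    by (simp add: \<delta>_def far_mass_nonneg)
  have lower: "level_wt g L j k \<ge> 2 + peak_wt g j k"
    using base_wt_ge[of g j L] assms by (simp add: level_wt_def)
  have upper: "level_wt g L (Suc j) k \<le> peak_wt g (Suc j) k + 2 + \<delta>"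
    using base_wt_le[of g L "Suc j"] assms by (simp add: level_wt_def \<delta>_def)
  have "peak_wt g j k > 0"
    using assms by (simp add: peak_wt_pos)
  then have lower_scaled: "(1 + \<delta>) * 2 \<le> (1 + \<delta>) * level_wt g L j k"
    using lower \<open>\<delta> \<ge> 0\<close> by (intro mult_left_mono) auto
  \<comment> \<open>For k \<le> Suc j the peak term does not grow; for larger k the penalty pushes the left side below 2 (1 + \<delta>).\<close>
  consider "k \<le> Suc j" | "k = Suc (Suc j)" | "k = Suc (Suc (Suc j))"
    | "k \<notin> {j, Suc j, Suc (Suc j), Suc (Suc (Suc j))}" "k > Suc j"
    by force
  then have "crossing_penalty g k (Suc j) * level_wt g L (Suc j) k \<le> (1 + \<delta>) * level_wt g L j k"
  proof cases
    case 1
    then have "peak_wt g (Suc j) k \<le> peak_wt g j k"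
      using assms by (intro peak_wt_mono_level) auto
    moreover have "\<delta> * 2 \<le> \<delta> * level_wt g L j k"
      using lower \<open>peak_wt g j k > 0\<close> \<open>\<delta> \<ge> 0\<close> by (intro mult_left_mono) auto
    ultimately show ?thesis
      using 1 upper lower \<open>\<delta> \<ge> 0\<close> by (simp add: crossing_penalty_def algebra_simps)
  next
    case 2
    then have "crossing_penalty g k (Suc j) * level_wt g L (Suc j) k \<le> (g + 2 + \<delta>) / g"
      using upper assms by (simp add: crossing_penalty_def divide_right_mono)
    also have "\<dots> \<le> 2 * (1 + \<delta>)"
    proof -
      have "\<delta> * 1 \<le> \<delta> * (g * 2)"
        using assms \<open>\<delta> \<ge> 0\<close> by (intro mult_left_mono) auto
      then show ?thesis
        using assms by (simp add: field_simps)
    qed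
    finally show ?thesis
      using lower_scaled by linarith
  next
    case 3
    then show ?thesis
      using upper lower_scaled \<open>\<delta> \<ge> 0\<close> by (simp add: crossing_penalty_def)
  next
    case 4
    then have "peak_wt g (Suc j) k \<le> 1 / g^2"
      using assms by (intro peak_wt_far) auto
    also have "\<dots> \<le> \<delta>"
      unfolding \<delta>_def far_mass_def by (simp add: divide_right_mono)
    finally show ?thesis
      using 4 upper lower_scaled by (simp add: crossing_penalty_def)
  qed
  then show ?thesis
    by (simp add: \<delta>_def)
qed

lemma level_norm_eq: "level_norm g L i = (\<Sum>h=1..L+1. peak_wt g i h) + (real L + 1) * base_wt g L i"
  by (simp add: level_norm_def level_wt_def sum.distrib)

lemma level_norm_ge:
  assumes "g > 0" "1 \<le> i" "i \<le> L"
  shows "g + real L + 2 \<le> level_norm g L i"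
proof -
  have "(real L + 1) * 1 \<le> (real L + 1) * base_wt g L i"
    using base_wt_ge[of g i L] assms by (intro mult_left_mono) (auto split: if_splits)
  then have "real L + 1 \<le> (real L + 1) * base_wt g L i"
    by simp
  then show ?thesis
    using peak_sum_ge[OF assms] unfolding level_norm_eq by linarith
qed

lemma level_norm_le:
  assumes "g \<ge> 1"
  shows "level_norm g L i \<le> g + 2 * real L + 4 + (real L + 2) * far_mass g L"
proof -
  have "(real L + 1) * base_wt g L i \<le> (real L + 1) * (2 + far_mass g L)"
    using base_wt_le[OF assms] by (intro mult_left_mono) auto
  then show ?thesis
    using peak_sum_le[OF assms, where L = L and i = i]
    unfolding level_norm_eq by (simp add: algebra_simps)
qed

lemma level_wt_pos: "g > 0 \<Longrightarrow> level_wt g L i k > 0"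
  unfolding level_wt_def base_wt_def
  by (intro add_pos_nonneg peak_wt_pos sum_nonneg) auto

lemma level_norm_pos: "g > 0 \<Longrightarrow> level_norm g L i > 0"
  unfolding level_norm_def by (intro sum_pos level_wt_pos) auto

lemma level_ratio_ge:
  assumes "g \<ge> 2" "j < L"
  shows "crossing_penalty g k (Suc j) / (1 + far_mass g L)
           * ((g + real L + 2) / (g + 2 * real L + 4 + (real L + 2) * far_mass g L))
         \<le> (level_wt g L j k / level_norm g L j) / (level_wt g L (Suc j) k / level_norm g L (Suc j))"
proof -
  have "g > 0" "far_mass g L \<ge> 0"
    using assms(1) by (auto simp: far_mass_nonneg)
  have weights: "crossing_penalty g k (Suc j) / (1 + far_mass g L) \<le> level_wt g L j k / level_wt g L (Suc j) k"
    using crossing_penalty_level_wt_le[OF assms, of k] level_wt_pos[OF \<open>g > 0\<close>] \<open>far_mass g L \<ge> 0\<close>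
    by (simp add: field_simps)
  have norms: "(g + real L + 2) / (g + 2 * real L + 4 + (real L + 2) * far_mass g L)
      \<le> level_norm g L (Suc j) / level_norm g L j"
    using level_norm_ge[of g "Suc j" L] level_norm_le[of g L j] level_norm_pos[OF \<open>g > 0\<close>] assms
    by (intro frac_le) auto
  have "crossing_penalty g k (Suc j) \<ge> 0"
    using assms(1) by (simp add: crossing_penalty_def)
  then have "crossing_penalty g k (Suc j) / (1 + far_mass g L)
           * ((g + real L + 2) / (g + 2 * real L + 4 + (real L + 2) * far_mass g L))
      \<le> level_wt g L j k / level_wt g L (Suc j) k * (level_norm g L (Suc j) / level_norm g L j)"
    using weights norms assms \<open>far_mass g L \<ge> 0\<close> level_wt_pos[OF \<open>g > 0\<close>] level_norm_pos[OF \<open>g > 0\<close>]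
    by (intro mult_mono) (auto intro: less_imp_le)
  then show ?thesis
    by (simp add: field_simps)
qed

lemma cubic_level_factor_ge:
  fixes n g \<delta> :: real
  assumes "n \<ge> 2" and g_def: "g = n ^ 3" and \<delta>_def: "\<delta> = n / g^2"
  shows "1 - 1 / n \<le> 1 / (1 + \<delta>) * ((g + n + 1) / (g + 2 * n + 2 + (n + 1) * \<delta>))"
proof -
  have "n * n \<ge> 2 * 2"
    using assms(1) by (intro mult_mono) auto
  then have "4 * n \<le> n * n * n"
    using assms(1) mult_right_mono[of 4 "n * n" n] by simp
  then have g_ge: "g \<ge> 4 * n"
    by (simp add: g_def power3_eq_cube)
  then have g_ge': "g \<ge> 2 * n + 2"
    using assms(1) by linarith
  have "g > 0" "\<delta> \<ge> 0"
    using assms(1) by (auto simp: g_def \<delta>_def)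
  have "\<delta> * g = n / g"
    using \<open>g > 0\<close> by (simp add: \<delta>_def power2_eq_square)
  also have "\<dots> \<le> 1 / 4"
    using g_ge \<open>g > 0\<close> by (simp add: field_simps)
  finally have \<delta>g: "\<delta> * g \<le> 1 / 4" .
  have "8 * (n * (n + 1)) \<le> g * g"
    using g_ge g_ge' assms(1) mult_mono[of "4 * n" g "2 * n + 2" g] by (simp add: algebra_simps)
  then have \<delta>n: "(n + 1) * \<delta> \<le> 1 / 8"
    using \<open>g > 0\<close> by (simp add: \<delta>_def power2_eq_square field_simps)
  moreover have "\<delta> \<le> (n + 1) * \<delta>"
    using \<open>\<delta> \<ge> 0\<close> assms(1) mult_right_mono[of 1 "n + 1" \<delta>] by simp
  ultimately have "(n + 1) * \<delta> * \<delta> \<le> 1 / 8 * 1"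
    using \<open>\<delta> \<ge> 0\<close> by (intro mult_mono) auto
  then have denom: "(1 + \<delta>) * (g + 2 * n + 2 + (n + 1) * \<delta>) \<le> g + 2 * n + 3"
    using \<delta>g \<delta>n by (simp add: algebra_simps)
  have "n * n * 1 \<le> n * n * n"
    using assms(1) by (intro mult_left_mono) auto
  then have "g \<ge> n^2"
    by (simp add: g_def power2_eq_square power3_eq_cube)
  define D where "D = (1 + \<delta>) * (g + 2 * n + 2 + (n + 1) * \<delta>)"
  have "D > 0"
    using assms(1) \<open>g > 0\<close> \<open>\<delta> \<ge> 0\<close> unfolding D_def by (intro mult_pos_pos add_pos_nonneg) auto
  have "(n - 1) * D \<le> (n - 1) * (g + 2 * n + 3)"
    using denom assms(1) unfolding D_def by (intro mult_left_mono) auto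
  also have "\<dots> \<le> (g + n + 1) * n"
    using \<open>g \<ge> n^2\<close> by (simp add: algebra_simps power2_eq_square)
  finally have "(n - 1) * D / n \<le> g + n + 1"
    using assms(1) by (simp add: pos_divide_le_eq)
  moreover have "(1 - 1 / n) * D = (n - 1) * D / n"
    using assms(1) by (simp add: field_simps)
  ultimately show ?thesis
    using \<open>D > 0\<close> unfolding D_def by (simp add: mult_imp_le_div_pos)
qed

lemma piA_ratio_ge:
  assumes "1 \<le> i" "i \<le> L"
  shows "(1 - 1 / (real L + 1)) * crossing_penalty (gam L) k i \<le> piA L (i - 1) k / piA L i k"
proof -
  obtain j where i: "i = Suc j" and "j < L"
    using assms by (cases i) auto
  define n g \<delta> where "n = real L + 1" and "g = gam L" and "\<delta> = far_mass (gam L) L"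
  have "n \<ge> 2" "g \<ge> 2"
    using assms gam_ge_8[of L] by (auto simp: n_def g_def)
  have "g = n ^ 3" "\<delta> = n / g^2"
    by (simp_all add: n_def g_def \<delta>_def gam_def far_mass_def)
  moreover have "g + n + 1 = g + real L + 2"
    and "g + 2 * n + 2 + (n + 1) * \<delta> = g + 2 * real L + 4 + (real L + 2) * \<delta>"
    by (simp_all add: n_def algebra_simps)
  ultimately have factor:
    "1 - 1 / n \<le> 1 / (1 + \<delta>) * ((g + real L + 2) / (g + 2 * real L + 4 + (real L + 2) * \<delta>))"
    using cubic_level_factor_ge[OF \<open>n \<ge> 2\<close>] by metis
  have "crossing_penalty g k i \<ge> 0"
    using \<open>g \<ge> 2\<close> by (simp add: crossing_penalty_def)
  with factor have "(1 - 1 / n) * crossing_penalty g k i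
      \<le> 1 / (1 + \<delta>) * ((g + real L + 2) / (g + 2 * real L + 4 + (real L + 2) * \<delta>)) * crossing_penalty g k i"
    by (rule mult_right_mono)
  also have "\<dots> \<le> piA L (i - 1) k / piA L i k"
    using level_ratio_ge[OF \<open>g \<ge> 2\<close> \<open>j < L\<close>, of k]
    by (simp add: i piA_eq_level_wt g_def \<delta>_def mult_ac)
  finally show ?thesis
    by (simp add: n_def g_def)
qed

lemma crossing_penalty_prod_ge:
  assumes "g \<ge> 1" "finite A"
  shows "1 / (2 * g) \<le> (\<Prod>i\<in>A. crossing_penalty g k i)"
proof -
  have "1 / (2 * g) \<le> (if k - 1 \<in> A then 1 / g else 1) * (if k - 2 \<in> A then 1 / 2 else 1)"
    using assms(1) by (auto simp: field_simps)
  also have "\<dots> = (\<Prod>i\<in>A. (if i = k - 1 then 1 / g else 1) * (if i = k - 2 then 1 / 2 else 1))"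
    using assms(2) by (simp add: prod.distrib)
  also have "\<dots> \<le> (\<Prod>i\<in>A. crossing_penalty g k i)"
    using assms(1) by (intro prod_mono) (auto simp: crossing_penalty_def field_simps)
  finally show ?thesis .
qed

lemma one_minus_inverse_power_ge: "1 / (real L + 1) \<le> (1 - 1 / (real L + 1)) ^ L"
proof -
  have "1 / (real L + 1) = 1 + real L * (- 1 / (real L + 1))"
    by (simp add: field_simps)
  also have "\<dots> \<le> (1 + - 1 / (real L + 1)) ^ L"
    by (intro Bernoulli_inequality) (simp add: field_simps)
  finally show ?thesis
    by simp
qed

lemma bottleneck_product_ge:
  assumes "L \<ge> 1"
  shows "1 / (real L + 1) * (1 / (2 * gam L)) \<le> (\<Prod>i=1..L. min 1 (piA L (i - 1) k / piA L i k))"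
proof -
  define q where "q = 1 - 1 / (real L + 1)"
  have "0 \<le> q" "q \<le> 1"
    by (simp_all add: q_def field_simps)
  have "gam L \<ge> 8"
    using gam_ge_8[OF assms] .
  then have penalty: "0 \<le> crossing_penalty (gam L) k i" "crossing_penalty (gam L) k i \<le> 1" for i
    by (simp_all add: crossing_penalty_def)
  have "1 / (real L + 1) * (1 / (2 * gam L)) \<le> q ^ L * (\<Prod>i=1..L. crossing_penalty (gam L) k i)"
    using one_minus_inverse_power_ge[of L] crossing_penalty_prod_ge[of "gam L" "{1..L}" k] \<open>gam L \<ge> 8\<close> \<open>0 \<le> q\<close>
    unfolding q_def by (intro mult_mono) auto
  also have "\<dots> = (\<Prod>i=1..L. q * crossing_penalty (gam L) k i)"
    by (simp add: prod.distrib)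
  also have "\<dots> \<le> (\<Prod>i=1..L. min 1 (piA L (i - 1) k / piA L i k))"
  proof (intro prod_mono conjI)
    fix i assume "i \<in> {1..L}"
    then show "q * crossing_penalty (gam L) k i \<le> min 1 (piA L (i - 1) k / piA L i k)"
      using piA_ratio_ge[of i L k, folded q_def] penalty[of i] \<open>q \<le> 1\<close> mult_le_one
      by auto
  qed (use penalty \<open>0 \<le> q\<close> in auto)
  finally show ?thesis .
qed

theorem lemma12:
  fixes L :: nat
  assumes "L \<ge> 1"
  shows "bottleneck L > 1 / (real L + 1) ^ 7"
proof -
  define n where "n = real L + 1"
  have "n \<ge> 2"
    using assms by (simp add: n_def)
  then have "2 * n ^ 4 < n ^ 3 * n ^ 4"
    using power_mono[of 2 n 3] by (intro mult_strict_right_mono) auto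
  moreover have "gam L = n ^ 3"
    by (simp add: gam_def n_def)
  ultimately have "1 / n ^ 7 < 1 / n * (1 / (2 * gam L))"
    using \<open>n \<ge> 2\<close> by (simp add: field_simps eval_nat_numeral)
  then show ?thesis
    using bottleneck_product_ge[OF assms] unfolding bottleneck_def n_def
    by (subst Min_gr_iff) (auto intro: less_le_trans)
qed

end
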